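(* Let $Q$ be a Moufang loop and $X$ a $2$-divisible normal subloop of $Q$ that is a commutative group. Then every inner mapping of $Q$ restricts to an automorphism of $X$.
   Context: A loop is a magma with identity $1$ in which the left translations $L_x(y)=xy$ and right translations $R_x(y)=yx$ are bijections; it is Moufang if it satisfies $xy\cdot zx=(x\cdot yz)x$. A subloop is normal if it is the kernel of a homomorphism. The inner mapping group $\mathrm{Inn}(Q)$ is the stabilizer of $1$ in the permutation group generated by all $L_x,R_x$; its elements are inner mappings. $X$ is $2$-divisible if $x\mapsto x^2$ is surjective on $X$. *)

theory Defs
  imports "HOL-Library.FuncSet"
begin

definition loop :: "'a set \<Rightarrow> ('a \<Rightarrow> 'a \<Rightarrow> 'a) \<Rightarrow> 'a \<Rightarrow> bool" where
  "loop Q m e \<longleftrightarrow> e \<in> Q \<and> (\<forall>x\<in>Q. \<forall>y\<in>Q. m x y \<in> Q)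
     \<and> (\<forall>x\<in>Q. m e x = x \<and> m x e = x)
     \<and> (\<forall>x\<in>Q. bij_betw (\<lambda>y. m x y) Q Q \<and> bij_betw (\<lambda>y. m y x) Q Q)"

definition moufang_loop :: "'a set \<Rightarrow> ('a \<Rightarrow> 'a \<Rightarrow> 'a) \<Rightarrow> 'a \<Rightarrow> bool" where
  "moufang_loop Q m e \<longleftrightarrow> loop Q m e \<and>
     (\<forall>x\<in>Q. \<forall>y\<in>Q. \<forall>z\<in>Q. m (m x y) (m z x) = m (m x (m y z)) x)"

definition loop_hom :: "'a set \<Rightarrow> ('a \<Rightarrow> 'a \<Rightarrow> 'a) \<Rightarrow> 'b set \<Rightarrow> ('b \<Rightarrow> 'b \<Rightarrow> 'b) \<Rightarrow> ('a \<Rightarrow> 'b) \<Rightarrow> bool" where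
  "loop_hom Q m Q' m' h \<longleftrightarrow> h \<in> Q \<rightarrow> Q' \<and> (\<forall>x\<in>Q. \<forall>y\<in>Q. h (m x y) = m' (h x) (h y))"

definition hom_kernel :: "'a set \<Rightarrow> ('a \<Rightarrow> 'b) \<Rightarrow> 'b \<Rightarrow> 'a set" where
  "hom_kernel Q h e' = {x\<in>Q. h x = e'}"

definition Ltr :: "'a set \<Rightarrow> ('a \<Rightarrow> 'a \<Rightarrow> 'a) \<Rightarrow> 'a \<Rightarrow> 'a \<Rightarrow> 'a" where
  "Ltr Q m x = (\<lambda>y\<in>Q. m x y)"

definition Rtr :: "'a set \<Rightarrow> ('a \<Rightarrow> 'a \<Rightarrow> 'a) \<Rightarrow> 'a \<Rightarrow> 'a \<Rightarrow> 'a" where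
  "Rtr Q m x = (\<lambda>y\<in>Q. m y x)"

inductive_set mult_group :: "'a set \<Rightarrow> ('a \<Rightarrow> 'a \<Rightarrow> 'a) \<Rightarrow> ('a \<Rightarrow> 'a) set"
  for Q m where
  ident: "(\<lambda>y\<in>Q. y) \<in> mult_group Q m"
| left: "\<lbrakk>f \<in> mult_group Q m; x \<in> Q\<rbrakk> \<Longrightarrow> compose Q (Ltr Q m x) f \<in> mult_group Q m"
| left_inv: "\<lbrakk>f \<in> mult_group Q m; x \<in> Q\<rbrakk> \<Longrightarrow>
     compose Q (restrict (inv_into Q (Ltr Q m x)) Q) f \<in> mult_group Q m"
| right: "\<lbrakk>f \<in> mult_group Q m; x \<in> Q\<rbrakk> \<Longrightarrow> compose Q (Rtr Q m x) f \<in> mult_group Q m"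
| right_inv: "\<lbrakk>f \<in> mult_group Q m; x \<in> Q\<rbrakk> \<Longrightarrow>
     compose Q (restrict (inv_into Q (Rtr Q m x)) Q) f \<in> mult_group Q m"

definition inner_mapping_group :: "'a set \<Rightarrow> ('a \<Rightarrow> 'a \<Rightarrow> 'a) \<Rightarrow> 'a \<Rightarrow> ('a \<Rightarrow> 'a) set" where
  "inner_mapping_group Q m e = {f \<in> mult_group Q m. f e = e}"

definition commutative_group_on :: "'a set \<Rightarrow> ('a \<Rightarrow> 'a \<Rightarrow> 'a) \<Rightarrow> bool" where
  "commutative_group_on X m \<longleftrightarrow>
     (\<forall>x\<in>X. \<forall>y\<in>X. m x y \<in> X) \<and>
     (\<forall>x\<in>X. \<forall>y\<in>X. \<forall>z\<in>X. m (m x y) z = m x (m y z)) \<and>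
     (\<forall>x\<in>X. \<forall>y\<in>X. m x y = m y x) \<and>
     (\<exists>u\<in>X. (\<forall>x\<in>X. m u x = x \<and> m x u = x) \<and> (\<forall>x\<in>X. \<exists>y\<in>X. m x y = u \<and> m y x = u))"

definition two_divisible :: "'a set \<Rightarrow> ('a \<Rightarrow> 'a \<Rightarrow> 'a) \<Rightarrow> bool" where
  "two_divisible X m \<longleftrightarrow> (\<forall>x\<in>X. \<exists>y\<in>X. m y y = x)"

definition automorphism_on :: "'a set \<Rightarrow> ('a \<Rightarrow> 'a \<Rightarrow> 'a) \<Rightarrow> ('a \<Rightarrow> 'a) \<Rightarrow> bool" where
  "automorphism_on X m f \<longleftrightarrow> bij_betw f X X \<and> (\<forall>x\<in>X. \<forall>y\<in>X. f (m x y) = m (f x) (f y))"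

end

theory Submission
  imports Defs
begin

text \<open>Every element of the multiplication group of a Moufang loop is the first component of
  an autotopism, because the Moufang identities say precisely this for the translations.
  Hence an inner mapping \<open>f\<close>, which fixes \<open>1\<close>, is a right pseudo-automorphism with some
  companion \<open>c\<close>: \<open>f x \<cdot> (f y \<cdot> c) = f (x y) \<cdot> c\<close>, and the left Moufang identity turns this into
  \<open>f (y \<cdot> t y) = (f y \<cdot> f t) \<cdot> f y\<close>. In the abelian group \<open>X\<close> write \<open>a = y\<^sup>2\<close>; then
  \<open>a t = y t y\<close>, so \<open>f (a t) = f y f t f y = f a f t\<close>. Finally \<open>f\<close>, like every element of the
  multiplication group, permutes the cosets of the kernel \<open>X\<close>, and it fixes \<open>1\<close>, so it maps
  \<open>X\<close> onto itself.\<close>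

definition fibre_preserving :: "'a set \<Rightarrow> ('a \<Rightarrow> 'b) \<Rightarrow> ('a \<Rightarrow> 'a) \<Rightarrow> bool" where
  "fibre_preserving Q h \<phi> \<longleftrightarrow> (\<forall>x\<in>Q. \<forall>y\<in>Q. h (\<phi> x) = h (\<phi> y) \<longleftrightarrow> h x = h y)"

lemma fibre_preserving_compose:
  assumes "\<phi> \<in> Q \<rightarrow> Q" "fibre_preserving Q h \<psi>" "fibre_preserving Q h \<phi>"
  shows "fibre_preserving Q h (compose Q \<psi> \<phi>)"
  unfolding fibre_preserving_def
proof (intro ballI)
  fix x y assume "x \<in> Q" "y \<in> Q"
  moreover from this have "\<phi> x \<in> Q" "\<phi> y \<in> Q" using assms(1) by auto
  ultimately show "h (compose Q \<psi> \<phi> x) = h (compose Q \<psi> \<phi> y) \<longleftrightarrow> h x = h y"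
    using assms(2,3) unfolding fibre_preserving_def by (simp add: compose_eq)
qed

lemma fibre_preserving_inv_into:
  assumes bij: "bij_betw \<phi> Q Q" and pres: "fibre_preserving Q h \<phi>"
  shows "fibre_preserving Q h (restrict (inv_into Q \<phi>) Q)"
  unfolding fibre_preserving_def
proof (intro ballI)
  fix x y assume xy: "x \<in> Q" "y \<in> Q"
  have inv: "inv_into Q \<phi> z \<in> Q" "\<phi> (inv_into Q \<phi> z) = z" if "z \<in> Q" for z
    using bij that unfolding bij_betw_def by (auto intro: inv_into_into f_inv_into_f)
  have "h (\<phi> (inv_into Q \<phi> x)) = h (\<phi> (inv_into Q \<phi> y)) \<longleftrightarrow> h (inv_into Q \<phi> x) = h (inv_into Q \<phi> y)"
    using pres inv xy unfolding fibre_preserving_def by blast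
  then show "h (restrict (inv_into Q \<phi>) Q x) = h (restrict (inv_into Q \<phi>) Q y) \<longleftrightarrow> h x = h y"
    using inv xy by simp
qed

lemma bij_betw_fibre:
  assumes bij: "bij_betw f Q Q" and pres: "fibre_preserving Q h f" and "a \<in> Q" "f a = a"
  shows "bij_betw f {x\<in>Q. h x = h a} {x\<in>Q. h x = h a}"
proof (rule bij_betw_subset[OF bij], simp)
  have "f ` {x\<in>Q. h x = h a} \<subseteq> {x\<in>Q. h x = h a}"
    using assms bij_betwE unfolding fibre_preserving_def by fastforce
  moreover have "{x\<in>Q. h x = h a} \<subseteq> f ` {x\<in>Q. h x = h a}"
  proof
    fix x assume x: "x \<in> {x\<in>Q. h x = h a}"
    then obtain z where "z \<in> Q" "x = f z"
      using bij unfolding bij_betw_def by blast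
    moreover from this x have "h z = h a"
      using pres \<open>a \<in> Q\<close> \<open>f a = a\<close> unfolding fibre_preserving_def
      by (metis (mono_tags, lifting) mem_Collect_eq)
    ultimately show "x \<in> f ` {x\<in>Q. h x = h a}" by blast
  qed
  ultimately show "f ` {x\<in>Q. h x = h a} = {x\<in>Q. h x = h a}" by blast
qed

lemma commutative_group_hom_if_preserves_squares_and_triples:
  assumes grp: "commutative_group_on X m" and div: "two_divisible X m" and fX: "f ` X \<subseteq> X"
    and squares: "\<And>y. y \<in> X \<Longrightarrow> f (m y y) = m (f y) (f y)"
    and triples: "\<And>y t. y \<in> X \<Longrightarrow> t \<in> X \<Longrightarrow> f (m y (m t y)) = m (m (f y) (f t)) (f y)"
    and "a \<in> X" "t \<in> X"
  shows "f (m a t) = m (f a) (f t)"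
proof -
  have assoc: "\<And>x y z. x \<in> X \<Longrightarrow> y \<in> X \<Longrightarrow> z \<in> X \<Longrightarrow> m (m x y) z = m x (m y z)"
    and comm: "\<And>x y. x \<in> X \<Longrightarrow> y \<in> X \<Longrightarrow> m x y = m y x"
    using grp unfolding commutative_group_on_def by blast+
  obtain y where y: "y \<in> X" "m y y = a"
    using div \<open>a \<in> X\<close> unfolding two_divisible_def by blast
  have fy: "f y \<in> X" and ft: "f t \<in> X" using fX y \<open>t \<in> X\<close> by auto
  have "f (m a t) = f (m y (m t y))"
    using y \<open>t \<in> X\<close> assoc comm by metis
  also have "\<dots> = m (m (f y) (f t)) (f y)" using triples y \<open>t \<in> X\<close> by blast
  also have "\<dots> = m (m (f y) (f y)) (f t)" using assoc comm fy ft by metis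
  also have "\<dots> = m (f a) (f t)" using squares y by metis
  finally show ?thesis .
qed

locale loop_on =
  fixes Q :: "'a set" and m :: "'a \<Rightarrow> 'a \<Rightarrow> 'a" and e :: 'a
  assumes loop: "loop Q m e"
begin

lemma mult_closed [simp]: "x \<in> Q \<Longrightarrow> y \<in> Q \<Longrightarrow> m x y \<in> Q"
  and unit_closed [simp]: "e \<in> Q"
  and left_unit [simp]: "x \<in> Q \<Longrightarrow> m e x = x"
  and right_unit [simp]: "x \<in> Q \<Longrightarrow> m x e = x"
  using loop unfolding loop_def by blast+

lemma Ltr_bij: "a \<in> Q \<Longrightarrow> bij_betw (Ltr Q m a) Q Q"
  and Rtr_bij: "a \<in> Q \<Longrightarrow> bij_betw (Rtr Q m a) Q Q"
  using loop unfolding loop_def Ltr_def Rtr_def by simp_all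

lemma left_cancel: "a \<in> Q \<Longrightarrow> x \<in> Q \<Longrightarrow> y \<in> Q \<Longrightarrow> m a x = m a y \<longleftrightarrow> x = y"
  and right_cancel: "a \<in> Q \<Longrightarrow> x \<in> Q \<Longrightarrow> y \<in> Q \<Longrightarrow> m x a = m y a \<longleftrightarrow> x = y"
  using loop unfolding loop_def bij_betw_def inj_on_def by blast+

definition rinv :: "'a \<Rightarrow> 'a" where
  "rinv x = (SOME y. y \<in> Q \<and> m x y = e)"

lemma rinv_closed [simp]: "x \<in> Q \<Longrightarrow> rinv x \<in> Q"
  and right_inverse [simp]: "x \<in> Q \<Longrightarrow> m x (rinv x) = e"
proof -
  assume "x \<in> Q"
  then have "e \<in> (\<lambda>y. m x y) ` Q"
    using loop unfolding loop_def bij_betw_def by simp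
  then have "\<exists>y. y \<in> Q \<and> m x y = e" by blast
  then show "rinv x \<in> Q" "m x (rinv x) = e"
    unfolding rinv_def by (metis (mono_tags, lifting) someI_ex)+
qed

lemma mult_group_bij: "f \<in> mult_group Q m \<Longrightarrow> bij_betw f Q Q"
proof (induction rule: mult_group.induct)
  case ident
  show ?case unfolding bij_betw_restrict_eq by (simp add: bij_betw_def)
qed (simp_all add: bij_betw_compose bij_betw_inv_into Ltr_bij Rtr_bij)

lemma mult_group_closed [simp]: "f \<in> mult_group Q m \<Longrightarrow> x \<in> Q \<Longrightarrow> f x \<in> Q"
  using mult_group_bij bij_betwE by blast

lemma loop_hom_unit:
  assumes "loop Q' m' e'" "loop_hom Q m Q' m' h"
  shows "h e = e'"
proof -
  interpret Q': loop_on Q' m' e' by (rule loop_on.intro) fact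
  have "h e \<in> Q'" using assms(2) unfolding loop_hom_def by auto
  moreover have "m' (h e) (h e) = m' (h e) e'"
    using assms(2) \<open>h e \<in> Q'\<close> unfolding loop_hom_def by (metis left_unit unit_closed Q'.right_unit)
  ultimately show ?thesis using Q'.left_cancel Q'.unit_closed by meson
qed

lemma mult_group_fibre_preserving:
  assumes "loop Q' m' e'" "loop_hom Q m Q' m' h" and f: "f \<in> mult_group Q m"
  shows "fibre_preserving Q h f"
proof -
  interpret Q': loop_on Q' m' e' by (rule loop_on.intro) fact
  have hQ: "h \<in> Q \<rightarrow> Q'" and hm: "\<And>x y. x \<in> Q \<Longrightarrow> y \<in> Q \<Longrightarrow> h (m x y) = m' (h x) (h y)"
    using assms(2) unfolding loop_hom_def by blast+
  have Ltr: "fibre_preserving Q h (Ltr Q m a)" and Rtr: "fibre_preserving Q h (Rtr Q m a)"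
    if "a \<in> Q" for a
    using that hQ unfolding fibre_preserving_def Ltr_def Rtr_def
    by (auto simp: hm Q'.left_cancel Q'.right_cancel Pi_iff)
  from f show ?thesis
  proof (induction rule: mult_group.induct)
    case ident
    then show ?case unfolding fibre_preserving_def by simp
  qed (simp_all add: fibre_preserving_compose fibre_preserving_inv_into
        Ltr Rtr Ltr_bij Rtr_bij bij_betw_imp_funcset mult_group_bij)
qed

definition weak_autotopism :: "('a \<Rightarrow> 'a) \<Rightarrow> ('a \<Rightarrow> 'a) \<Rightarrow> ('a \<Rightarrow> 'a) \<Rightarrow> bool" where
  "weak_autotopism \<alpha> \<beta> \<gamma> \<longleftrightarrow> \<beta> \<in> Q \<rightarrow> Q \<and> (\<forall>x\<in>Q. \<forall>y\<in>Q. m (\<alpha> x) (\<beta> y) = \<gamma> (m x y))"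

definition right_pseudo_automorphism :: "('a \<Rightarrow> 'a) \<Rightarrow> 'a \<Rightarrow> bool" where
  "right_pseudo_automorphism f c \<longleftrightarrow> (\<forall>x\<in>Q. \<forall>y\<in>Q. m (f x) (m (f y) c) = m (f (m x y)) c)"

lemma weak_autotopism_right_pseudo_automorphism:
  assumes atp: "weak_autotopism f \<beta> \<gamma>" and "f e = e"
  shows "right_pseudo_automorphism f (\<beta> e)"
proof -
  have \<beta>: "\<beta> y \<in> Q" and law: "m (f x) (\<beta> y) = \<gamma> (m x y)" if "x \<in> Q" "y \<in> Q" for x y
    using atp that unfolding weak_autotopism_def by auto
  have \<beta>\<gamma>: "\<beta> y = \<gamma> y" if "y \<in> Q" for y
    using law[of e y] \<beta>[of e y] that \<open>f e = e\<close> by simp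
  have \<beta>_eq: "\<beta> x = m (f x) (\<beta> e)" if "x \<in> Q" for x
    using law[of x e] \<beta>\<gamma> that by simp
  show ?thesis
    unfolding right_pseudo_automorphism_def
  proof (intro ballI)
    fix x y assume xy: "x \<in> Q" "y \<in> Q"
    have "m (f x) (m (f y) (\<beta> e)) = m (f x) (\<beta> y)" using \<beta>_eq[OF xy(2)] by simp
    also have "\<dots> = \<gamma> (m x y)" using law[OF xy] .
    also have "\<dots> = \<beta> (m x y)" using \<beta>\<gamma>[of "m x y"] xy by simp
    also have "\<dots> = m (f (m x y)) (\<beta> e)" using \<beta>_eq[of "m x y"] xy by simp
    finally show "m (f x) (m (f y) (\<beta> e)) = m (f (m x y)) (\<beta> e)" .
  qed
qed

end

locale moufang_loop_on = loop_on +
  assumes moufang: "x \<in> Q \<Longrightarrow> y \<in> Q \<Longrightarrow> z \<in> Q \<Longrightarrow> m (m x y) (m z x) = m (m x (m y z)) x"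
begin

lemma flexible: "x \<in> Q \<Longrightarrow> z \<in> Q \<Longrightarrow> m x (m z x) = m (m x z) x"
  using moufang[of x e z] by simp

lemma left_inverse_property_rinv [simp]: "x \<in> Q \<Longrightarrow> z \<in> Q \<Longrightarrow> m x (m (rinv x) z) = z"
proof -
  assume a: "x \<in> Q" "z \<in> Q"
  have "m z x = m (m x (m (rinv x) z)) x"
    using moufang[of x "rinv x" z] a by simp
  then show ?thesis using a right_cancel[of x z] by simp
qed

lemma left_inverse_property [simp]: "x \<in> Q \<Longrightarrow> z \<in> Q \<Longrightarrow> m (rinv x) (m x z) = z"
  using left_cancel[of x "m (rinv x) (m x z)" z] by simp

lemma left_inverse [simp]: "x \<in> Q \<Longrightarrow> m (rinv x) x = e"
  using left_inverse_property[of x e] by simp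

lemma right_inverse_property_rinv [simp]: "x \<in> Q \<Longrightarrow> y \<in> Q \<Longrightarrow> m (m y (rinv x)) x = y"
proof -
  assume a: "x \<in> Q" "y \<in> Q"
  have "m x y = m (m x (m y (rinv x))) x"
    using moufang[of x y "rinv x"] a by simp
  also have "\<dots> = m x (m (m y (rinv x)) x)" using flexible a by simp
  finally show ?thesis using a left_cancel[of x y] by simp
qed

lemma right_inverse_property [simp]: "x \<in> Q \<Longrightarrow> y \<in> Q \<Longrightarrow> m (m y x) (rinv x) = y"
  using right_cancel[of x "m (m y x) (rinv x)" y] by simp

lemma rinv_rinv [simp]: "x \<in> Q \<Longrightarrow> rinv (rinv x) = x"
  using left_cancel[of "rinv x" "rinv (rinv x)" x] by simp

lemma rinv_mult: "x \<in> Q \<Longrightarrow> y \<in> Q \<Longrightarrow> rinv (m x y) = m (rinv y) (rinv x)"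
proof -
  assume xy: "x \<in> Q" "y \<in> Q"
  have "m (rinv (m x y)) x = m (rinv (m x y)) (m (m x y) (rinv y))" using xy by simp
  also have "\<dots> = rinv y" using left_inverse_property[of "m x y" "rinv y"] xy by simp
  finally have "m (m (rinv (m x y)) x) (rinv x) = m (rinv y) (rinv x)" by simp
  then show ?thesis using xy by simp
qed

lemma right_moufang: "u \<in> Q \<Longrightarrow> x \<in> Q \<Longrightarrow> w \<in> Q \<Longrightarrow> m (m (m u x) w) x = m u (m (m x w) x)"
proof -
  assume uxw: "u \<in> Q" "x \<in> Q" "w \<in> Q"
  define v where "v = m u x"
  have v: "v \<in> Q" using uxw v_def by simp
  have "m (m x (rinv v)) (m (m v w) x) = m (m x w) x"
    using moufang[of x "rinv v" "m v w"] uxw v by simp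
  then have "m (m v w) x = m (rinv (m x (rinv v))) (m (m x w) x)"
    using uxw v by (metis left_inverse_property mult_closed rinv_closed)
  also have "rinv (m x (rinv v)) = u" using uxw v_def by (simp add: rinv_mult)
  finally show ?thesis using v_def by simp
qed

lemma left_moufang: "x \<in> Q \<Longrightarrow> w \<in> Q \<Longrightarrow> q \<in> Q \<Longrightarrow> m x (m w (m x q)) = m (m (m x w) x) q"
proof -
  assume xwq: "x \<in> Q" "w \<in> Q" "q \<in> Q"
  define z where "z = rinv (m x q)"
  have z: "z \<in> Q" using xwq z_def by simp
  have "m (m x (m w (m x q))) (m z x) = m (m x w) x"
    using moufang[of x "m w (m x q)" z] xwq z_def by simp
  then have "m x (m w (m x q)) = m (m (m x w) x) (rinv (m z x))"
    using xwq z by (metis right_inverse_property mult_closed)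
  also have "rinv (m z x) = q" using xwq z_def by (simp add: rinv_mult)
  finally show ?thesis .
qed

lemma restrict_inv_into_Ltr: "a \<in> Q \<Longrightarrow> restrict (inv_into Q (Ltr Q m a)) Q = Ltr Q m (rinv a)"
  and restrict_inv_into_Rtr: "a \<in> Q \<Longrightarrow> restrict (inv_into Q (Rtr Q m a)) Q = Rtr Q m (rinv a)"
proof -
  assume a: "a \<in> Q"
  have "inv_into Q (Ltr Q m a) x = m (rinv a) x" "inv_into Q (Rtr Q m a) x = m x (rinv a)"
    if "x \<in> Q" for x
    using Ltr_bij[OF a] Rtr_bij[OF a] a that
    by (auto intro!: inv_into_f_eq simp: bij_betw_def Ltr_def Rtr_def)
  then show "restrict (inv_into Q (Ltr Q m a)) Q = Ltr Q m (rinv a)"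
    "restrict (inv_into Q (Rtr Q m a)) Q = Rtr Q m (rinv a)"
    by (auto simp: Ltr_def Rtr_def)
qed

lemma mult_group_induct [consumes 1, case_names ident left right]:
  assumes "f \<in> mult_group Q m" and "P (\<lambda>y\<in>Q. y)"
    and "\<And>g a. g \<in> mult_group Q m \<Longrightarrow> P g \<Longrightarrow> a \<in> Q \<Longrightarrow> P (compose Q (Ltr Q m a) g)"
    and "\<And>g a. g \<in> mult_group Q m \<Longrightarrow> P g \<Longrightarrow> a \<in> Q \<Longrightarrow> P (compose Q (Rtr Q m a) g)"
  shows "P f"
  using assms(1)
proof induction
  case ident
  show ?case by (fact assms(2))
qed (simp_all add: assms(3,4) restrict_inv_into_Ltr restrict_inv_into_Rtr)

lemma mult_group_weak_autotopism: "f \<in> mult_group Q m \<Longrightarrow> \<exists>\<beta> \<gamma>. weak_autotopism f \<beta> \<gamma>"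
proof (induction rule: mult_group_induct)
  case ident
  have "weak_autotopism (\<lambda>y\<in>Q. y) (\<lambda>y. y) (\<lambda>y. y)"
    unfolding weak_autotopism_def by simp
  then show ?case by blast
next
  case (left g a)
  then obtain \<beta> \<gamma> where \<beta>: "\<beta> \<in> Q \<rightarrow> Q" and law: "\<And>x y. x \<in> Q \<Longrightarrow> y \<in> Q \<Longrightarrow> m (g x) (\<beta> y) = \<gamma> (m x y)"
    unfolding weak_autotopism_def by blast
  have "m (compose Q (Ltr Q m a) g x) (m (\<beta> y) a) = m (m a (\<gamma> (m x y))) a"
    if "x \<in> Q" "y \<in> Q" for x y
  proof -
    have gx: "g x \<in> Q" and \<beta>y: "\<beta> y \<in> Q" using \<beta> left.hyps that by auto
    have "m (compose Q (Ltr Q m a) g x) (m (\<beta> y) a) = m (m a (g x)) (m (\<beta> y) a)"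
      using gx that by (simp add: compose_eq Ltr_def)
    also have "\<dots> = m (m a (m (g x) (\<beta> y))) a" using moufang gx \<beta>y left.hyps by simp
    finally show ?thesis using law[OF that] by simp
  qed
  then have "weak_autotopism (compose Q (Ltr Q m a) g) (\<lambda>y. m (\<beta> y) a) (\<lambda>z. m (m a (\<gamma> z)) a)"
    unfolding weak_autotopism_def using \<beta> left.hyps by (auto simp: Pi_iff)
  then show ?case by blast
next
  case (right g a)
  then obtain \<beta> \<gamma> where \<beta>: "\<beta> \<in> Q \<rightarrow> Q" and law: "\<And>x y. x \<in> Q \<Longrightarrow> y \<in> Q \<Longrightarrow> m (g x) (\<beta> y) = \<gamma> (m x y)"
    unfolding weak_autotopism_def by blast
  have "m (compose Q (Rtr Q m a) g x) (m (m (rinv a) (\<beta> y)) (rinv a)) = m (\<gamma> (m x y)) (rinv a)"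
    if "x \<in> Q" "y \<in> Q" for x y
  proof -
    have gx: "g x \<in> Q" and \<beta>y: "\<beta> y \<in> Q" using \<beta> right.hyps that by auto
    have "m (compose Q (Rtr Q m a) g x) (m (m (rinv a) (\<beta> y)) (rinv a))
        = m (m (g x) a) (m (m (rinv a) (\<beta> y)) (rinv a))"
      using gx that by (simp add: compose_eq Rtr_def)
    also have "\<dots> = m (m (m (m (g x) a) (rinv a)) (\<beta> y)) (rinv a)"
      using right_moufang[of "m (g x) a" "rinv a" "\<beta> y"] gx \<beta>y right.hyps by simp
    finally show ?thesis using law[OF that] gx right.hyps by simp
  qed
  then have "weak_autotopism (compose Q (Rtr Q m a) g)
      (\<lambda>y. m (m (rinv a) (\<beta> y)) (rinv a)) (\<lambda>z. m (\<gamma> z) (rinv a))"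
    unfolding weak_autotopism_def using \<beta> right.hyps by (auto simp: Pi_iff)
  then show ?case by blast
qed

lemma right_pseudo_automorphism_triple:
  assumes "right_pseudo_automorphism f c" "c \<in> Q" "f \<in> Q \<rightarrow> Q" "y \<in> Q" "t \<in> Q"
  shows "f (m y (m t y)) = m (m (f y) (f t)) (f y)"
proof -
  have pseudo: "m (f x) (m (f z) c) = m (f (m x z)) c" if "x \<in> Q" "z \<in> Q" for x z
    using assms(1) that unfolding right_pseudo_automorphism_def by blast
  have fQ: "f y \<in> Q" "f t \<in> Q" using assms(3-5) by auto
  have "m (f (m y (m t y))) c = m (f y) (m (f (m t y)) c)" using pseudo assms(4,5) by simp
  also have "\<dots> = m (f y) (m (f t) (m (f y) c))" using pseudo assms(4,5) by simp
  also have "\<dots> = m (m (m (f y) (f t)) (f y)) c" using left_moufang fQ assms(2) by simp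
  finally show ?thesis
    using right_cancel assms fQ by (simp add: Pi_iff)
qed

end

theorem lemma4p2:
  fixes Q :: "'a set" and m :: "'a \<Rightarrow> 'a \<Rightarrow> 'a" and e :: 'a
    and Q' :: "'b set" and m' :: "'b \<Rightarrow> 'b \<Rightarrow> 'b" and e' :: 'b
    and h :: "'a \<Rightarrow> 'b" and X :: "'a set"
  assumes "moufang_loop Q m e"
    and "loop Q' m' e'" and "loop_hom Q m Q' m' h" and "X = hom_kernel Q h e'"
    and "commutative_group_on X m"
    and "two_divisible X m"
  shows "\<forall>f \<in> inner_mapping_group Q m e. automorphism_on X m f"
proof
  interpret moufang_loop_on Q m e
    using assms(1) unfolding moufang_loop_def moufang_loop_on_def moufang_loop_on_axioms_def loop_on_def
    by blast
  fix f assume "f \<in> inner_mapping_group Q m e"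
  then have f: "f \<in> mult_group Q m" and "f e = e" unfolding inner_mapping_group_def by auto
  have X_eq: "X = {x\<in>Q. h x = h e}"
    using assms(4) loop_hom_unit[OF assms(2,3)] unfolding hom_kernel_def by simp
  have bijX: "bij_betw f X X"
    unfolding X_eq using mult_group_bij[OF f] mult_group_fibre_preserving[OF assms(2,3) f] \<open>f e = e\<close>
    by (intro bij_betw_fibre) auto
  obtain \<beta> \<gamma> where atp: "weak_autotopism f \<beta> \<gamma>"
    using mult_group_weak_autotopism[OF f] by blast
  have "right_pseudo_automorphism f (\<beta> e)" "\<beta> e \<in> Q"
    using weak_autotopism_right_pseudo_automorphism[OF atp \<open>f e = e\<close>] atp
    unfolding weak_autotopism_def by auto
  then have triples: "f (m y (m t y)) = m (m (f y) (f t)) (f y)" if "y \<in> Q" "t \<in> Q" for y t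
    using right_pseudo_automorphism_triple that f by auto
  have squares: "f (m y y) = m (f y) (f y)" if "y \<in> X" for y
    using triples[of y e] \<open>f e = e\<close> that X_eq f by auto
  have "f ` X \<subseteq> X" using bijX unfolding bij_betw_def by blast
  moreover have "f (m y (m t y)) = m (m (f y) (f t)) (f y)" if "y \<in> X" "t \<in> X" for y t
    using triples that X_eq by simp
  ultimately have "f (m x y) = m (f x) (f y)" if "x \<in> X" "y \<in> X" for x y
    using commutative_group_hom_if_preserves_squares_and_triples[of X m f, OF assms(5,6)] squares that
    by blast
  with bijX show "automorphism_on X m f" unfolding automorphism_on_def by blast
qed

end
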